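(* (Darboux transformation.) Let $(\Omega(\mathcal{A}),\mathrm{d},\bar{\mathrm{d}})$ be a bidifferential graded algebra and let $\phi\in\mathcal{A}$ satisfy $\bar{\mathrm{d}}\,\mathrm{d}\,\phi=(\mathrm{d}\phi)(\mathrm{d}\phi)$. Let $\Delta'\in\mathcal{A}$ satisfy $\bar{\mathrm{d}}\Delta'=(\mathrm{d}\Delta')\Delta'$, let $\theta\in\mathcal{A}$ be invertible with $$\bar{\mathrm{d}}\theta=(\mathrm{d}\phi)\,\theta+(\mathrm{d}\theta)\,\Delta',$$ and let $C'\in\mathcal{A}$ with $\mathrm{d}C'=0$. Set $\phi':=\phi+\theta\Delta'\theta^{-1}-C'$. Then $$\bar{\mathrm{d}}(\theta\Delta'\theta^{-1})=(\mathrm{d}\phi')\,\theta\Delta'\theta^{-1}-\theta\Delta'\theta^{-1}\,\mathrm{d}\phi,$$ and $\phi'$ satisfies $\bar{\mathrm{d}}\,\mathrm{d}\,\phi'=(\mathrm{d}\phi')(\mathrm{d}\phi')$.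
   Context: $\mathcal{A}$ is a unital associative algebra over $\mathbb{C}$ with identity $I$. A bidifferential graded algebra $(\Omega(\mathcal{A}),\mathrm{d},\bar{\mathrm{d}})$ consists of a graded associative algebra $\Omega(\mathcal{A})=\bigoplus_{r\ge 0}\Omega^r(\mathcal{A})$ with $\Omega^0(\mathcal{A})=\mathcal{A}$ (each $\Omega^r(\mathcal{A})$ an $\mathcal{A}$-bimodule) together with two linear maps $\mathrm{d},\bar{\mathrm{d}}:\Omega^r(\mathcal{A})\to\Omega^{r+1}(\mathcal{A})$ satisfying the graded Leibniz rule $\mathrm{d}(\alpha\beta)=(\mathrm{d}\alpha)\beta+(-1)^r\alpha\,\mathrm{d}\beta$ for $\alpha\in\Omega^r(\mathcal{A})$ (and likewise for $\bar{\mathrm{d}}$), and $\mathrm{d}^2=\bar{\mathrm{d}}^2=0$, $\mathrm{d}\bar{\mathrm{d}}+\bar{\mathrm{d}}\mathrm{d}=0$. *)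

theory Defs
  imports Complex_Main
begin

text \<open>A graded algebra Omega = direct sum of Omega^r, modelled as a type 'w carrying a
unital ring structure, a complex scalar action sc making it a unital associative
complex algebra, and degree subspaces G r.  The algebra A is G 0.\<close>

definition complex_algebra :: "(complex \<Rightarrow> 'w::ring_1 \<Rightarrow> 'w) \<Rightarrow> bool" where
  "complex_algebra sc \<longleftrightarrow>
     (\<forall>x. sc 1 x = x) \<and>
     (\<forall>a b x. sc (a * b) x = sc a (sc b x)) \<and>
     (\<forall>a b x. sc (a + b) x = sc a x + sc b x) \<and>
     (\<forall>a x y. sc a (x + y) = sc a x + sc a y) \<and>
     (\<forall>a x y. sc a (x * y) = sc a x * y) \<and>
     (\<forall>a x y. sc a (x * y) = x * sc a y)"

definition graded_algebra ::
  "(complex \<Rightarrow> 'w::ring_1 \<Rightarrow> 'w) \<Rightarrow> (nat \<Rightarrow> 'w set) \<Rightarrow> bool" where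
  "graded_algebra sc G \<longleftrightarrow>
     complex_algebra sc \<and>
     (\<forall>r. 0 \<in> G r \<and> (\<forall>x\<in>G r. \<forall>y\<in>G r. x + y \<in> G r) \<and> (\<forall>c. \<forall>x\<in>G r. sc c x \<in> G r)) \<and>
     (\<forall>r s. \<forall>x\<in>G r. \<forall>y\<in>G s. x * y \<in> G (r + s)) \<and>
     1 \<in> G 0 \<and>
     (\<forall>x. \<exists>N f. finite N \<and> (\<forall>r\<in>N. f r \<in> G r) \<and> x = sum f N) \<and>
     (\<forall>N f. finite N \<longrightarrow> (\<forall>r\<in>N. f r \<in> G r) \<longrightarrow> sum f N = 0 \<longrightarrow> (\<forall>r\<in>N. f r = 0))"

definition graded_derivation ::
  "(complex \<Rightarrow> 'w::ring_1 \<Rightarrow> 'w) \<Rightarrow> (nat \<Rightarrow> 'w set) \<Rightarrow> ('w \<Rightarrow> 'w) \<Rightarrow> bool" where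
  "graded_derivation sc G D \<longleftrightarrow>
     (\<forall>x y. D (x + y) = D x + D y) \<and>
     (\<forall>c x. D (sc c x) = sc c (D x)) \<and>
     (\<forall>r. \<forall>x\<in>G r. D x \<in> G (Suc r)) \<and>
     (\<forall>r. \<forall>a\<in>G r. \<forall>b. D (a * b) = D a * b + (-1) ^ r * (a * D b))"

definition bidifferential_graded_algebra ::
  "(complex \<Rightarrow> 'w::ring_1 \<Rightarrow> 'w) \<Rightarrow> (nat \<Rightarrow> 'w set) \<Rightarrow> ('w \<Rightarrow> 'w) \<Rightarrow> ('w \<Rightarrow> 'w) \<Rightarrow> bool" where
  "bidifferential_graded_algebra sc G d db \<longleftrightarrow>
     graded_algebra sc G \<and> graded_derivation sc G d \<and> graded_derivation sc G db \<and>
     (\<forall>x. d (d x) = 0) \<and> (\<forall>x. db (db x) = 0) \<and> (\<forall>x. d (db x) + db (d x) = 0)"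

end

theory Submission
  imports Defs
begin

(* Write T = theta * Delta * theta^-1 for the conjugate of Delta.  The proof has two parts.
   (1) A graded derivation D satisfies the Leibniz rule with sign +1 on degree 0 and -1 on
       degree 1; from D(theta * theta^-1) = D 1 = 0 one gets the inverse rule
       D theta^-1 = - theta^-1 (D theta) theta^-1 and hence a formula for D T.
       Applying it to d and to dbar and inserting the hypotheses on dbar theta and
       dbar Delta, a ring computation gives  dbar T = (d phi + d T) T - T d phi.
   (2) Applying d to this identity and using d d = 0, d dbar = - dbar d and the sign-twisted
       Leibniz rule on the degree-1 element d phi + d T gives
       dbar (d T) = (d phi + d T) d T + d T d phi.  Adding dbar d phi = (d phi)^2 and using
       d C = 0 yields dbar d phi' = (d phi')^2 for phi' = phi + T - C. *)

lemma graded_derivation_add: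
  "graded_derivation sc G D \<Longrightarrow> D (x + y) = D x + D y"
  unfolding graded_derivation_def by blast

lemma graded_derivation_diff:
  assumes "graded_derivation sc G D"
  shows "D (x - y) = D x - D y"
  using graded_derivation_add[OF assms, of "x - y" y] by (simp add: algebra_simps)

lemma graded_derivation_mult_deg0:
  "graded_derivation sc G D \<Longrightarrow> a \<in> G 0 \<Longrightarrow> D (a * b) = D a * b + a * D b"
  unfolding graded_derivation_def by force

lemma graded_derivation_mult_deg1:
  assumes "graded_derivation sc G D" and "a \<in> G 1"
  shows "D (a * b) = D a * b - a * D b"
proof -
  have "D (a * b) = D a * b + (-1) ^ 1 * (a * D b)"
    using assms unfolding graded_derivation_def by blast
  then show ?thesis by simp
qed

lemma graded_derivation_deg0:
  "graded_derivation sc G D \<Longrightarrow> a \<in> G 0 \<Longrightarrow> D a \<in> G 1"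
  unfolding graded_derivation_def by (metis One_nat_def)

lemma graded_derivation_one:
  "graded_derivation sc G D \<Longrightarrow> 1 \<in> G 0 \<Longrightarrow> D 1 = 0"
  using graded_derivation_mult_deg0[of sc G D 1 1] by simp

lemma graded_derivation_inverse:
  assumes D: "graded_derivation sc G D" and "1 \<in> G 0" and t: "t \<in> G 0"
    and right_inv: "t * ti = 1" and left_inv: "ti * t = 1"
  shows "D ti = - (ti * D t * ti)"
proof -
  have "D t * ti + t * D ti = 0"
    using graded_derivation_mult_deg0[OF D t, of ti] graded_derivation_one[OF D \<open>1 \<in> G 0\<close>]
    by (simp add: right_inv)
  then have "ti * D t * ti + (ti * t) * D ti = 0"
    by (metis distrib_left mult.assoc mult_zero_right)
  then show ?thesis by (simp add: left_inv eq_neg_iff_add_eq_0 add.commute)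
qed

lemma graded_derivation_conjugate:
  assumes D: "graded_derivation sc G D" and "1 \<in> G 0"
    and t: "t \<in> G 0" and tx: "t * x \<in> G 0"
    and "t * ti = 1" and "ti * t = 1"
  shows "D (t * x * ti) = D t * x * ti + t * D x * ti - t * x * ti * D t * ti"
  using graded_derivation_mult_deg0[OF D tx, of ti] graded_derivation_mult_deg0[OF D t, of x]
    graded_derivation_inverse[OF D assms(2) t assms(5,6)]
  by (simp add: algebra_simps)

lemma graded_algebra_closure:
  "graded_algebra sc G \<Longrightarrow>
     1 \<in> G 0 \<and> (\<forall>r s. \<forall>x\<in>G r. \<forall>y\<in>G s. x * y \<in> G (r + s)) \<and>
     (\<forall>r. \<forall>x\<in>G r. \<forall>y\<in>G r. x + y \<in> G r)"
  unfolding graded_algebra_def by simp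

locale bidifferential =
  fixes sc :: "complex \<Rightarrow> 'w::ring_1 \<Rightarrow> 'w" and G :: "nat \<Rightarrow> 'w set"
    and d db :: "'w \<Rightarrow> 'w"
  assumes bidga: "bidifferential_graded_algebra sc G d db"
begin

lemma d_derivation: "graded_derivation sc G d"
  and db_derivation: "graded_derivation sc G db"
  and d_d: "d (d x) = 0"
  and d_db: "d (db x) = - db (d x)"
  using bidga unfolding bidifferential_graded_algebra_def
  by (simp_all add: eq_neg_iff_add_eq_0)

lemma one_deg0: "1 \<in> G 0"
  and mult_closed: "a \<in> G r \<Longrightarrow> b \<in> G s \<Longrightarrow> a * b \<in> G (r + s)"
  and add_closed: "a \<in> G r \<Longrightarrow> b \<in> G r \<Longrightarrow> a + b \<in> G r"
  using graded_algebra_closure bidga unfolding bidifferential_graded_algebra_def by blast+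

lemma mult_deg0: "a \<in> G 0 \<Longrightarrow> b \<in> G 0 \<Longrightarrow> a * b \<in> G 0"
  using mult_closed[of a 0 b 0] by simp

lemma darboux_conjugate:
  assumes "\<Delta> \<in> G 0" and "\<theta> \<in> G 0"
    and "db \<Delta> = d \<Delta> * \<Delta>"
    and right_inv: "\<theta> * \<theta>i = 1" and left_inv: "\<theta>i * \<theta> = 1"
    and db_theta: "db \<theta> = d \<phi> * \<theta> + d \<theta> * \<Delta>"
  defines "T \<equiv> \<theta> * \<Delta> * \<theta>i"
  shows "db T = (d \<phi> + d T) * T - T * d \<phi>"
proof -
  have theta_Delta: "\<theta> * \<Delta> \<in> G 0" using assms(1,2) by (simp add: mult_deg0)
  have dT: "d T = d \<theta> * \<Delta> * \<theta>i + \<theta> * d \<Delta> * \<theta>i - T * d \<theta> * \<theta>i"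
    unfolding T_def
    by (rule graded_derivation_conjugate[OF d_derivation one_deg0 assms(2) theta_Delta
          right_inv left_inv])
  have "d T * T = d \<theta> * \<Delta> * (\<theta>i * \<theta>) * \<Delta> * \<theta>i + \<theta> * d \<Delta> * (\<theta>i * \<theta>) * \<Delta> * \<theta>i
      - T * d \<theta> * (\<theta>i * \<theta>) * \<Delta> * \<theta>i"
    unfolding dT by (simp add: T_def algebra_simps)
  then have dT_T: "d T * T = d \<theta> * \<Delta> * \<Delta> * \<theta>i + \<theta> * d \<Delta> * \<Delta> * \<theta>i - T * d \<theta> * \<Delta> * \<theta>i"
    by (simp add: left_inv mult.assoc)
  have "db T = db \<theta> * \<Delta> * \<theta>i + \<theta> * db \<Delta> * \<theta>i - T * db \<theta> * \<theta>i"
    unfolding T_def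
    by (rule graded_derivation_conjugate[OF db_derivation one_deg0 assms(2) theta_Delta
          right_inv left_inv])
  also have "\<dots> = d \<phi> * T + d \<theta> * \<Delta> * \<Delta> * \<theta>i + \<theta> * d \<Delta> * \<Delta> * \<theta>i
      - T * d \<phi> * (\<theta> * \<theta>i) - T * d \<theta> * \<Delta> * \<theta>i"
    unfolding db_theta assms(3) by (simp add: T_def algebra_simps)
  finally show ?thesis
    unfolding distrib_right dT_T by (simp add: right_inv algebra_simps)
qed

lemma darboux_db_d:
  assumes "\<phi> \<in> G 0" and T: "T \<in> G 0"
    and db_T: "db T = (d \<phi> + d T) * T - T * d \<phi>"
  shows "db (d T) = (d \<phi> + d T) * d T + d T * d \<phi>"
proof -
  have deg1: "d \<phi> + d T \<in> G 1"
    using add_closed graded_derivation_deg0[OF d_derivation] assms(1,2) by blast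
  have "- db (d T) = d (db T)" by (simp add: d_db)
  also have "\<dots> = d ((d \<phi> + d T) * T) - d (T * d \<phi>)"
    unfolding db_T by (rule graded_derivation_diff[OF d_derivation])
  also have "\<dots> = - ((d \<phi> + d T) * d T) - d T * d \<phi>"
    using graded_derivation_mult_deg1[OF d_derivation deg1]
      graded_derivation_mult_deg0[OF d_derivation T]
      graded_derivation_add[OF d_derivation] d_d
    by simp
  finally show ?thesis by (metis minus_add_distrib minus_minus diff_conv_add_uminus)
qed

end

theorem mainTheorem4:
  fixes sc :: "complex \<Rightarrow> 'w::ring_1 \<Rightarrow> 'w" and G :: "nat \<Rightarrow> 'w set"
    and d db :: "'w \<Rightarrow> 'w" and \<phi> \<Delta> \<theta> \<theta>i C :: 'w
  assumes "bidifferential_graded_algebra sc G d db"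
    and "\<phi> \<in> G 0" and "\<Delta> \<in> G 0" and "\<theta> \<in> G 0" and "\<theta>i \<in> G 0" and "C \<in> G 0"
    and "db (d \<phi>) = d \<phi> * d \<phi>"
    and "db \<Delta> = d \<Delta> * \<Delta>"
    and "\<theta> * \<theta>i = 1" and "\<theta>i * \<theta> = 1"
    and "db \<theta> = d \<phi> * \<theta> + d \<theta> * \<Delta>"
    and "d C = 0"
  shows "let \<phi>' = \<phi> + \<theta> * \<Delta> * \<theta>i - C in
           db (\<theta> * \<Delta> * \<theta>i) = d \<phi>' * (\<theta> * \<Delta> * \<theta>i) - (\<theta> * \<Delta> * \<theta>i) * d \<phi>
         \<and> db (d \<phi>') = d \<phi>' * d \<phi>'"
proof -
  interpret bidifferential sc G d db by (rule bidifferential.intro) (rule assms(1))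
  define T where "T = \<theta> * \<Delta> * \<theta>i"
  have T_deg0: "T \<in> G 0" unfolding T_def using assms(3-5) by (simp add: mult_deg0)
  have d_phi': "d (\<phi> + T - C) = d \<phi> + d T"
    using graded_derivation_diff[OF d_derivation] graded_derivation_add[OF d_derivation] assms(12)
    by simp
  have db_T: "db T = (d \<phi> + d T) * T - T * d \<phi>"
    unfolding T_def using darboux_conjugate[OF assms(3,4,8-11)] .
  have "db (d \<phi> + d T) = d \<phi> * d \<phi> + ((d \<phi> + d T) * d T + d T * d \<phi>)"
    using graded_derivation_add[OF db_derivation] assms(7) darboux_db_d[OF assms(2) T_deg0 db_T]
    by simp
  then have "db (d (\<phi> + T - C)) = d (\<phi> + T - C) * d (\<phi> + T - C)"
    unfolding d_phi' by (simp add: algebra_simps)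
  with db_T show ?thesis unfolding Let_def T_def[symmetric] d_phi' by simp
qed

end
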